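(* Let $\alpha>0$ and suppose $H$ satisfies (B1) and (B2). Let $u\in\mathcal{U}^+(\mathbb{T}^d\times I)$ be a viscosity subsolution and $v\in\mathcal{U}^-(\mathbb{T}^d\times I)$ a viscosity supersolution of $$\alpha w(x,\xi)+H(x,Dw(x,\xi),\xi)+\int_I k(\xi,\eta)\big(w(x,\xi)-w(x,\eta)\big)\,d\eta=0\quad\text{in }\mathbb{T}^d\times I,\qquad(\mathrm{DP})$$ and assume $u$ and $-v$ are bounded above on $\mathbb{T}^d\times I$. Then $u\le v$ on $\mathbb{T}^d\times I$.
   Context: $I\subset\mathbb{R}$ is a finite interval with $|I|=1$; $\mathbb{T}^d$ is the flat torus; $k:I\times I\to\mathbb{R}$ is Borel measurable with $0<k_0\le k\le k_1$. $H\in C(\mathbb{T}^d\times\mathbb{R}^d)\otimes\mathcal{B}(I)$ (continuous in $(x,p)$ for each $\xi$, Borel in $\xi$), with $H(\cdot,p,\cdot)$ bounded for each $p$. (B1): there are constants $C_1,C_2>0$, $m>1$ with $C_1|p|^m-C_2\le H(x,p,\xi)$ for all $(x,p,\xi)$. (B2): for each $R>0$ there is a modulus of continuity $\omega_R$ with $|H(x,p,\xi)-H(y,p,\xi)|\le\omega_R(|x-y|)$ for all $x,y\in\mathbb{T}^d$, $|p|\le R$, $\xi\in I$. $\mathcal{U}^+(\mathbb{T}^d\times I)$: functions $u$ with $u(x,\cdot)$ Borel measurable and integrable on $I$ for each $x$ and $u(\cdot,\xi)$ upper semicontinuous for each $\xi$; $\mathcal{U}^-:=-\mathcal{U}^+$.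 $u\in\mathcal{U}^+$ is a viscosity subsolution of (DP) if whenever $\phi\in C^1(\mathbb{T}^d)$, $\xi\in I$, and $u(\cdot,\xi)-\phi$ has a local maximum at $\hat x$, then $\alpha u(\hat x,\xi)+H(\hat x,D\phi(\hat x),\xi)+\int_I k(\xi,\eta)(u(\hat x,\xi)-u(\hat x,\eta))d\eta\le0$; a supersolution $v\in\mathcal{U}^-$ satisfies the reverse inequality at local minima of $v(\cdot,\xi)-\phi$. *)

theory Defs
  imports "HOL-Analysis.Analysis"
begin

text \<open>Points of the flat torus are represented by their Z^d-periodic lifts to R^d.\<close>

definition int_lattice :: "(real ^ 'd) set" where
  "int_lattice = {z. \<forall>i. z $ i \<in> \<int>}"

definition periodic_fn :: "(real ^ 'd \<Rightarrow> 'b) \<Rightarrow> bool" where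
  "periodic_fn f \<longleftrightarrow> (\<forall>x. \<forall>z \<in> int_lattice. f (x + z) = f x)"

definition usc :: "('a::topological_space \<Rightarrow> real) \<Rightarrow> bool" where
  "usc f \<longleftrightarrow> (\<forall>x t. f x < t \<longrightarrow> (\<forall>\<^sub>F y in at x. f y < t))"

definition modulus :: "(real \<Rightarrow> real) \<Rightarrow> bool" where
  "modulus \<omega> \<longleftrightarrow> \<omega> 0 = 0 \<and> (\<forall>r\<ge>0. \<omega> r \<ge> 0) \<and> mono_on {0..} \<omega>
     \<and> (\<omega> \<longlongrightarrow> 0) (at_right 0)"

definition Uplus :: "real set \<Rightarrow> (real ^ 'd \<Rightarrow> real \<Rightarrow> real) \<Rightarrow> bool" where
  "Uplus I u \<longleftrightarrow> (\<forall>\<xi>\<in>I. periodic_fn (\<lambda>x. u x \<xi>))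
     \<and> (\<forall>x. set_borel_measurable lborel I (u x) \<and> set_integrable lborel I (u x))
     \<and> (\<forall>\<xi>\<in>I. usc (\<lambda>x. u x \<xi>))"

definition Uminus :: "real set \<Rightarrow> (real ^ 'd \<Rightarrow> real \<Rightarrow> real) \<Rightarrow> bool" where
  "Uminus I v \<longleftrightarrow> Uplus I (\<lambda>x \<xi>. - v x \<xi>)"

definition C1_torus :: "(real ^ 'd \<Rightarrow> real) \<Rightarrow> (real ^ 'd \<Rightarrow> real ^ 'd) \<Rightarrow> bool" where
  "C1_torus \<phi> D\<phi> \<longleftrightarrow> periodic_fn \<phi> \<and> continuous_on UNIV D\<phi>
     \<and> (\<forall>x. (\<phi> has_derivative (\<lambda>h. D\<phi> x \<bullet> h)) (at x))"

definition loc_max :: "(real ^ 'd \<Rightarrow> real) \<Rightarrow> real ^ 'd \<Rightarrow> bool" where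
  "loc_max f x \<longleftrightarrow> (\<exists>e>0. \<forall>y. dist y x < e \<longrightarrow> f y \<le> f x)"

definition loc_min :: "(real ^ 'd \<Rightarrow> real) \<Rightarrow> real ^ 'd \<Rightarrow> bool" where
  "loc_min f x \<longleftrightarrow> (\<exists>e>0. \<forall>y. dist y x < e \<longrightarrow> f x \<le> f y)"

definition visc_sub ::
  "real set \<Rightarrow> real \<Rightarrow> (real ^ 'd \<Rightarrow> real ^ 'd \<Rightarrow> real \<Rightarrow> real) \<Rightarrow> (real \<Rightarrow> real \<Rightarrow> real)
     \<Rightarrow> (real ^ 'd \<Rightarrow> real \<Rightarrow> real) \<Rightarrow> bool" where
  "visc_sub I \<alpha> H k u \<longleftrightarrow> Uplus I u \<and>
     (\<forall>\<phi> D\<phi> \<xi> xh. C1_torus \<phi> D\<phi> \<and> \<xi> \<in> I \<and> loc_max (\<lambda>x. u x \<xi> - \<phi> x) xh \<longrightarrow>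
        \<alpha> * u xh \<xi> + H xh (D\<phi> xh) \<xi> + (LINT \<eta>:I|lborel. k \<xi> \<eta> * (u xh \<xi> - u xh \<eta>)) \<le> 0)"

definition visc_super ::
  "real set \<Rightarrow> real \<Rightarrow> (real ^ 'd \<Rightarrow> real ^ 'd \<Rightarrow> real \<Rightarrow> real) \<Rightarrow> (real \<Rightarrow> real \<Rightarrow> real)
     \<Rightarrow> (real ^ 'd \<Rightarrow> real \<Rightarrow> real) \<Rightarrow> bool" where
  "visc_super I \<alpha> H k v \<longleftrightarrow> Uminus I v \<and>
     (\<forall>\<phi> D\<phi> \<xi> xh. C1_torus \<phi> D\<phi> \<and> \<xi> \<in> I \<and> loc_min (\<lambda>x. v x \<xi> - \<phi> x) xh \<longrightarrow>
        \<alpha> * v xh \<xi> + H xh (D\<phi> xh) \<xi> + (LINT \<eta>:I|lborel. k \<xi> \<eta> * (v xh \<xi> - v xh \<eta>)) \<ge> 0)"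

end

(*
  Doubling of variables on the torus. For fixed xi and c > 0 maximize
  u(x,xi) - v(y,xi) - c psi(x - y), where psi is a smooth Z^d-periodic penalty that dominates
  |x - y|^2 near the diagonal. At a maximum (a, b) the test functions for u and v share the gradient
  p = c Dpsi(a - b). The subsolution inequality bounds H(a,p,xi) from above uniformly in c, so by
  coercivity (B1) p stays bounded, and by (B2) H(b,p,xi) - H(a,p,xi) vanishes as c grows, because
  |a - b|^2 <= psi(a - b) = O(1/c). Upper semicontinuity in x and a reverse Fatou lemma control the
  nonlocal terms in the limit, which gives (alpha + K) (u - v)(z,xi) <= K theta for
  K = int_I k(xi,eta) d eta and theta = sup (u - v). Since 0 <= K <= kappa, this yields
  (alpha + kappa) theta <= kappa theta, hence theta <= 0.
*)
theory Submission
  imports Defs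
begin

section \<open>Upper semicontinuity\<close>

lemma usc_iff_nhds: "usc f \<longleftrightarrow> (\<forall>x t. f x < t \<longrightarrow> (\<forall>\<^sub>F y in nhds x. f y < t))"
  unfolding usc_def eventually_nhds_conv_at by auto

lemma open_usc_sublevel: "usc f \<Longrightarrow> open {y. f y < t}"
  by (subst open_subopen) (force simp: usc_iff_nhds eventually_nhds)

lemma usc_tendsto_lt:
  assumes "usc f" "X \<longlonglongrightarrow> x" "f x < t"
  shows "\<forall>\<^sub>F n in sequentially. f (X n) < t"
proof -
  have "\<forall>\<^sub>F y in nhds x. f y < t" using assms(1,3) by (simp add: usc_iff_nhds)
  with assms(2) show ?thesis unfolding filterlim_iff by blast
qed

lemma usc_add: "usc f \<Longrightarrow> usc g \<Longrightarrow> usc (\<lambda>x. f x + g x)"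
  unfolding usc_iff_nhds
proof (intro allI impI)
  fix x t assume f: "\<forall>x t. f x < t \<longrightarrow> (\<forall>\<^sub>F y in nhds x. f y < t)"
    and g: "\<forall>x t. g x < t \<longrightarrow> (\<forall>\<^sub>F y in nhds x. g y < t)" and lt: "f x + g x < t"
  have "\<forall>\<^sub>F y in nhds x. f y < f x + (t - f x - g x) / 2"
    and "\<forall>\<^sub>F y in nhds x. g y < g x + (t - f x - g x) / 2"
    using f g lt by auto
  then show "\<forall>\<^sub>F y in nhds x. f y + g y < t"
    by eventually_elim (simp add: field_simps)
qed

lemma usc_compose:
  assumes "usc f" and "continuous_on UNIV g"
  shows "usc (\<lambda>x. f (g x))"
  unfolding usc_def
proof (intro allI impI)
  fix x t assume "f (g x) < t"
  then have "\<forall>\<^sub>F z in nhds (g x). f z < t" using assms(1) by (auto simp: usc_iff_nhds)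
  moreover have "filterlim g (nhds (g x)) (at x)"
    using assms(2) by (simp add: continuous_on_def)
  ultimately show "\<forall>\<^sub>F y in at x. f (g y) < t"
    unfolding filterlim_iff by blast
qed

lemma continuous_imp_usc: "continuous_on UNIV f \<Longrightarrow> usc f"
  unfolding usc_def continuous_on_def by (auto intro: order_tendstoD)

lemma usc_compact_finite_bound:
  assumes "usc f" "compact S" "\<And>y. y \<in> S \<Longrightarrow> \<exists>t\<in>T. f y < t"
  obtains D where "D \<subseteq> T" "finite D" "\<And>y. y \<in> S \<Longrightarrow> \<exists>t\<in>D. f y < t"
proof -
  have "S \<subseteq> (\<Union>t\<in>T. {y. f y < t})" using assms(3) by blast
  then obtain D where "D \<subseteq> T" "finite D" "S \<subseteq> (\<Union>t\<in>D. {y. f y < t})"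
    using compactE_image[OF assms(2), of T "\<lambda>t. {y. f y < t}"] open_usc_sublevel[OF assms(1)]
    by blast
  then show ?thesis using that by blast
qed

lemma usc_attains_sup:
  assumes "usc f" "compact S" "S \<noteq> {}"
  obtains x where "x \<in> S" "\<And>y. y \<in> S \<Longrightarrow> f y \<le> f x"
proof -
  have Max_bound: "\<forall>y\<in>S. f y < Max D" if "finite D" "\<And>y. y \<in> S \<Longrightarrow> \<exists>t\<in>D. f y < t" for D
    using that by (meson Max_ge less_le_trans)
  obtain D where "finite D" "\<And>y. y \<in> S \<Longrightarrow> \<exists>t\<in>D. f y < t"
  proof (rule usc_compact_finite_bound[OF assms(1,2)])
    show "\<exists>t\<in>UNIV. f y < t" for y using gt_ex by blast
  qed blast
  then have bdd: "bdd_above (f ` S)"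
    using Max_bound by (meson bdd_above.I2 less_imp_le)
  have "\<exists>x\<in>S. \<forall>y\<in>S. f y \<le> f x"
  proof (rule ccontr)
    assume "\<not> ?thesis"
    then have "f y < Sup (f ` S)" if "y \<in> S" for y
      using that bdd by (meson cSUP_upper less_le_trans not_le)
    then have "\<exists>t\<in>{..<Sup (f ` S)}. f y < t" if "y \<in> S" for y
      using that dense by (metis lessThan_iff)
    then obtain D where D: "D \<subseteq> {..<Sup (f ` S)}" "finite D" "\<And>y. y \<in> S \<Longrightarrow> \<exists>t\<in>D. f y < t"
      using usc_compact_finite_bound[OF assms(1,2)] by metis
    have "D \<noteq> {}" using D(3) assms(3) by blast
    have "Sup (f ` S) \<le> Max D"
      using Max_bound[OF D(2,3)] assms(3) by (meson cSUP_least less_imp_le)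
    moreover have "Max D < Sup (f ` S)" using D(1,2) \<open>D \<noteq> {}\<close> by auto
    ultimately show False by simp
  qed
  then show ?thesis using that by blast
qed

section \<open>A periodic penalty on the torus\<close>

(* Maclaurin: sin x >= x - x^3/6 >= x/3 for 0 <= x <= 2, and pi >= 3. *)
lemma abs_le_abs_sin_pi:
  fixes t :: real
  assumes "\<bar>t\<bar> \<le> 1/2"
  shows "\<bar>t\<bar> \<le> \<bar>sin (pi * t)\<bar>"
proof -
  define x where "x = pi * \<bar>t\<bar>"
  have "pi * \<bar>t\<bar> \<le> 4 * (1/2)" by (rule mult_mono) (use assms pi_less_4 in auto)
  then have x: "0 \<le> x" "x \<le> 2" by (auto simp: x_def)
  have "\<bar>sin x - (\<Sum>m<3. sin_coeff m * x ^ m)\<bar> \<le> inverse (fact 3) * \<bar>x\<bar> ^ 3"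
    by (rule Maclaurin_sin_bound)
  moreover have "(\<Sum>m<3. sin_coeff m * x ^ m) = x"
    by (simp add: numeral_3_eq_3 sin_coeff_def)
  ultimately have "\<bar>sin x - x\<bar> \<le> x ^ 3 / 6"
    using x by (simp add: fact_numeral)
  then have "x - x ^ 3 / 6 \<le> sin x" using abs_le_iff[of "sin x - x"] by linarith
  moreover have "x ^ 3 \<le> x * 4"
    using x mult_left_mono[OF power_mono[OF x(2) x(1), of 2] x(1)] by (simp add: power3_eq_cube power2_eq_square)
  moreover have "3 * \<bar>t\<bar> \<le> x" using pi_gt3 by (simp add: x_def mult_right_mono)
  ultimately have "\<bar>t\<bar> \<le> sin x" by linarith
  also have "sin x = \<bar>sin (pi * t)\<bar>"
    by (cases "t \<ge> 0") (use \<open>\<bar>t\<bar> \<le> sin x\<close> in \<open>auto simp: x_def\<close>)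
  finally show ?thesis .
qed

(* The torus version of the quadratic penalty |z|^2 (see norm_le_sqrt_penalty). *)
definition penalty :: "real ^ 'd \<Rightarrow> real" where
  "penalty z = (\<Sum>i\<in>UNIV. (sin (pi * z $ i))\<^sup>2)"

definition penalty_grad :: "real ^ 'd \<Rightarrow> real ^ 'd" where
  "penalty_grad z = (\<chi> i. 2 * pi * sin (pi * z $ i) * cos (pi * z $ i))"

lemma penalty_nonneg: "0 \<le> penalty z"
  unfolding penalty_def by (intro sum_nonneg) auto

lemma penalty_zero [simp]: "penalty 0 = 0"
  unfolding penalty_def by simp

lemma penalty_minus: "penalty (- z) = penalty z"
  unfolding penalty_def by simp

lemma penalty_grad_minus: "penalty_grad (- z) = - penalty_grad z"
  unfolding penalty_grad_def by (simp add: vec_eq_iff)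

lemma penalty_lattice_shift:
  assumes "l \<in> int_lattice"
  shows "penalty (z + l) = penalty z"
proof -
  have "(sin (pi * (z $ i + l $ i)))\<^sup>2 = (sin (pi * z $ i))\<^sup>2" for i
  proof -
    obtain n where "l $ i = of_int n" using assms by (auto simp: int_lattice_def elim: Ints_cases)
    then show ?thesis by (simp add: distrib_left sin_add power_mult_distrib)
  qed
  then show ?thesis unfolding penalty_def by simp
qed

lemma continuous_on_penalty_grad: "continuous_on UNIV penalty_grad"
  unfolding penalty_grad_def by (intro continuous_on_vec_lambda continuous_intros)

lemma has_derivative_penalty: "(penalty has_derivative (\<lambda>h. penalty_grad z \<bullet> h)) (at z)"
proof -
  have "((\<lambda>z. (sin (pi * z $ i))\<^sup>2) has_derivative
      (\<lambda>h. 2 * pi * sin (pi * z $ i) * cos (pi * z $ i) * h $ i)) (at z)" for i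
    by (auto intro!: derivative_eq_intros bounded_linear_imp_has_derivative simp: algebra_simps)
  then have "(penalty has_derivative
      (\<lambda>h. \<Sum>i\<in>UNIV. 2 * pi * sin (pi * z $ i) * cos (pi * z $ i) * h $ i)) (at z)"
    unfolding penalty_def by (intro has_derivative_sum)
  then show ?thesis by (simp add: penalty_grad_def inner_vec_def)
qed

lemma norm_le_sqrt_penalty:
  assumes "\<And>i. \<bar>z $ i\<bar> \<le> 1/2"
  shows "norm z \<le> sqrt (penalty z)"
proof -
  have "(z $ i)\<^sup>2 \<le> (sin (pi * z $ i))\<^sup>2" for i
    using abs_le_abs_sin_pi[OF assms] by (metis abs_ge_zero power2_abs power_mono)
  then show ?thesis
    unfolding norm_vec_def L2_set_def penalty_def by (intro real_sqrt_le_mono sum_mono) auto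
qed

lemma C1_torus_penalty:
  fixes b :: "real ^ 'd"
  shows "C1_torus (\<lambda>x. c * penalty (x - b) + e) (\<lambda>x. c *\<^sub>R penalty_grad (x - b))"
  unfolding C1_torus_def
proof (intro conjI allI)
  show "periodic_fn (\<lambda>x. c * penalty (x - b) + e)"
    unfolding periodic_fn_def
  proof (intro allI ballI)
    fix x z :: "real ^ 'd" assume "z \<in> int_lattice"
    then have "penalty (x - b + z) = penalty (x - b)" by (rule penalty_lattice_shift)
    then show "c * penalty (x + z - b) + e = c * penalty (x - b) + e" by (simp add: algebra_simps)
  qed
  show "continuous_on UNIV (\<lambda>x. c *\<^sub>R penalty_grad (x - b))"
    by (intro continuous_intros continuous_on_compose2[OF continuous_on_penalty_grad]) auto
  fix x
  show "((\<lambda>x. c * penalty (x - b) + e) has_derivative (\<lambda>h. c *\<^sub>R penalty_grad (x - b) \<bullet> h)) (at x)"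
  proof -
    have "((\<lambda>x. x - b) has_derivative (\<lambda>h. h)) (at x)" by (auto intro!: derivative_eq_intros)
    from has_derivative_compose[OF this has_derivative_penalty]
    have "((\<lambda>x. penalty (x - b)) has_derivative (\<lambda>h. penalty_grad (x - b) \<bullet> h)) (at x)" .
    from has_derivative_add_const[OF has_derivative_mult_right[OF this, of c], of e]
    show ?thesis by simp
  qed
qed

lemma int_lattice_diff: "a \<in> int_lattice \<Longrightarrow> b \<in> int_lattice \<Longrightarrow> a - b \<in> int_lattice"
  unfolding int_lattice_def by auto

lemma zero_in_int_lattice: "0 \<in> int_lattice"
  unfolding int_lattice_def by simp

lemma int_lattice_shift_into_cube: "\<exists>l\<in>int_lattice. x + l \<in> cbox 0 1"
proof
  let ?l = "\<chi> i. - of_int \<lfloor>x $ i\<rfloor>"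
  show "?l \<in> int_lattice" unfolding int_lattice_def by auto
  show "x + ?l \<in> cbox 0 1"
    unfolding mem_box_cart
  proof (intro allI conjI)
    fix i
    show "0 $ i \<le> (x + ?l) $ i" "(x + ?l) $ i \<le> 1 $ i"
      by simp_all (use real_of_int_floor_add_one_gt[of "x $ i"] in linarith)
  qed
qed

lemma int_lattice_shift_near: "\<exists>l\<in>int_lattice. \<forall>i. \<bar>(x - (y + l)) $ i\<bar> \<le> 1/2"
proof
  let ?l = "\<chi> i. of_int (round ((x - y) $ i))"
  show "?l \<in> int_lattice" unfolding int_lattice_def by auto
  show "\<forall>i. \<bar>(x - (y + ?l)) $ i\<bar> \<le> 1/2"
  proof
    fix i
    show "\<bar>(x - (y + ?l)) $ i\<bar> \<le> 1/2"
    proof -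
      have "(x - (y + ?l)) $ i = - (of_int (round ((x - y) $ i)) - (x - y) $ i)" by simp
      then show ?thesis using of_int_round_abs_le[of "(x - y) $ i"] by (simp only: abs_minus_cancel)
    qed
  qed
qed

lemma penalized_max_exists:
  fixes U V :: "real ^ 'd \<Rightarrow> real"
  assumes U: "usc U" "periodic_fn U" and V: "usc (\<lambda>y. - V y)" "periodic_fn V"
  obtains a b where "a \<in> cbox 0 1" "\<And>i. \<bar>(a - b) $ i\<bar> \<le> 1/2"
    "\<And>x y. U x - V y - c * penalty (x - y) \<le> U a - V b - c * penalty (a - b)"
proof -
  define \<Phi> where "\<Phi> x y = U x - V y - c * penalty (x - y)" for x y
  have \<Phi>_shift: "\<Phi> (x + l) (y + l') = \<Phi> x y" if "l \<in> int_lattice" "l' \<in> int_lattice" for x y l l'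
  proof -
    have "penalty (x + l - (y + l')) = penalty ((x - y) + (l - l'))"
      by (simp add: algebra_simps)
    also have "\<dots> = penalty (x - y)"
      by (rule penalty_lattice_shift[OF int_lattice_diff[OF that]])
    finally have "penalty (x + l - (y + l')) = penalty (x - y)" .
    then show ?thesis using U(2) V(2) that by (simp add: \<Phi>_def periodic_fn_def)
  qed
  have "continuous_on UNIV (\<lambda>p. - (c * penalty (fst p - snd p)))"
    unfolding penalty_def by (intro continuous_intros)
  then have "usc (\<lambda>p. U (fst p) + - V (snd p) + - (c * penalty (fst p - snd p)))"
    by (intro usc_add usc_compose[OF U(1) continuous_on_fst[OF continuous_on_id]]
        usc_compose[OF V(1) continuous_on_snd[OF continuous_on_id]] continuous_imp_usc)
  then have usc_\<Phi>: "usc (\<lambda>p. \<Phi> (fst p) (snd p))" unfolding \<Phi>_def by simp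
  define S where "S = cbox (0::real^'d) 1 \<times> cbox (0::real^'d) 1"
  have "compact S" unfolding S_def by (intro compact_Times compact_cbox)
  moreover have "(0::real^'d) \<in> cbox 0 1" by (simp add: mem_box_cart)
  then have "S \<noteq> {}" unfolding S_def Times_empty by blast
  ultimately obtain p where p: "p \<in> S" and max: "\<And>q. q \<in> S \<Longrightarrow> \<Phi> (fst q) (snd q) \<le> \<Phi> (fst p) (snd p)"
    using usc_attains_sup[OF usc_\<Phi>] by metis
  define a b0 where "a = fst p" and "b0 = snd p"
  obtain l where l: "l \<in> int_lattice" "\<And>i. \<bar>(a - (b0 + l)) $ i\<bar> \<le> 1/2"
    using int_lattice_shift_near by blast
  have "\<Phi> x y \<le> \<Phi> a (b0 + l)" for x y
  proof -
    obtain lx where lx: "lx \<in> int_lattice" "x + lx \<in> cbox 0 1"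
      using int_lattice_shift_into_cube by blast
    obtain ly where ly: "ly \<in> int_lattice" "y + ly \<in> cbox 0 1"
      using int_lattice_shift_into_cube by blast
    have "\<Phi> x y = \<Phi> (x + lx) (y + ly)" by (rule sym[OF \<Phi>_shift[OF lx(1) ly(1)]])
    also have "\<dots> \<le> \<Phi> a b0" using max[of "(x + lx, y + ly)"] lx(2) ly(2) by (simp add: S_def a_def b0_def)
    also have "\<dots> = \<Phi> (a + 0) (b0 + l)" by (rule sym[OF \<Phi>_shift[OF zero_in_int_lattice l(1)]])
    finally show ?thesis by simp
  qed
  moreover have "a \<in> cbox 0 1" using p by (simp add: S_def a_def mem_Times_iff)
  ultimately show ?thesis using that l(2) unfolding \<Phi>_def by blast
qed

section \<open>Integrals over a set of finite measure\<close>

lemma set_borel_measurable_mult: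
  fixes f g :: "'a \<Rightarrow> real"
  assumes "set_borel_measurable M A f" "set_borel_measurable M A g"
  shows "set_borel_measurable M A (\<lambda>x. f x * g x)"
proof -
  have "(\<lambda>x. (indicator A x * f x) * (indicator A x * g x)) \<in> borel_measurable M"
    using assms unfolding set_borel_measurable_def by simp
  moreover have "(\<lambda>x. (indicator A x * f x) * (indicator A x * g x)) = (\<lambda>x. indicator A x * (f x * g x))"
    by (auto simp: indicator_def)
  ultimately show ?thesis unfolding set_borel_measurable_def by simp
qed

lemma set_borel_measurable_const:
  "A \<in> sets M \<Longrightarrow> set_borel_measurable M A (\<lambda>x. c :: real)"
  unfolding set_borel_measurable_def by (simp add: borel_measurable_indicator)

lemma set_integrable_imp_measurable:
  "set_integrable M A (f :: 'a \<Rightarrow> real) \<Longrightarrow> set_borel_measurable M A f"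
  unfolding set_integrable_def set_borel_measurable_def by simp

lemma set_integrable_bounded_mult:
  fixes f g :: "'a \<Rightarrow> real"
  assumes g: "set_integrable M A g" and f: "set_borel_measurable M A f"
    and bound: "\<And>x. x \<in> A \<Longrightarrow> \<bar>f x\<bar> \<le> B"
  shows "set_integrable M A (\<lambda>x. f x * g x)"
proof (rule set_integrable_bound[where f="\<lambda>x. B * g x"])
  show "set_integrable M A (\<lambda>x. B * g x)" using g by simp
  show "set_borel_measurable M A (\<lambda>x. f x * g x)"
    using set_borel_measurable_mult[OF f set_integrable_imp_measurable[OF g]] .
  show "AE x in M. x \<in> A \<longrightarrow> norm (f x * g x) \<le> norm (B * g x)"
  proof (rule AE_I2, intro impI)
    fix x assume "x \<in> A"
    then have "\<bar>f x\<bar> * \<bar>g x\<bar> \<le> \<bar>B\<bar> * \<bar>g x\<bar>" using bound by (intro mult_right_mono) fastforce+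
    then show "norm (f x * g x) \<le> norm (B * g x)" by (simp add: abs_mult)
  qed
qed

lemma set_integrable_const:
  "A \<in> sets M \<Longrightarrow> emeasure M A < \<infinity> \<Longrightarrow> set_integrable M A (\<lambda>x. c :: real)"
  unfolding set_integrable_def by (simp add: integrable_mult_left)

lemma set_integral_ge_const:
  fixes f :: "'a \<Rightarrow> real"
  assumes "A \<in> sets M" "emeasure M A < \<infinity>" "set_integrable M A f" "\<And>x. x \<in> A \<Longrightarrow> c \<le> f x"
  shows "measure M A * c \<le> (LINT x:A|M. f x)"
proof -
  have "(LINT x:A|M. c) = measure M A * c"
    using set_integral_const[OF assms(1) assms(2)[THEN less_imp_neq], where c=c] by simp
  then show ?thesis using set_integral_mono[OF set_integrable_const[OF assms(1,2)] assms(3,4)] by simp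
qed

lemma set_integral_le_const:
  fixes f :: "'a \<Rightarrow> real"
  assumes "A \<in> sets M" "emeasure M A < \<infinity>" "set_integrable M A f" "\<And>x. x \<in> A \<Longrightarrow> f x \<le> c"
  shows "(LINT x:A|M. f x) \<le> measure M A * c"
proof -
  have "(LINT x:A|M. c) = measure M A * c"
    using set_integral_const[OF assms(1) assms(2)[THEN less_imp_neq], where c=c] by simp
  then show ?thesis using set_integral_mono[OF assms(3) set_integrable_const[OF assms(1,2)] assms(4)] by simp
qed

lemma set_integral_mult_const_diff:
  fixes k g :: "'a \<Rightarrow> real"
  assumes "set_integrable M A k" "set_integrable M A (\<lambda>x. k x * g x)"
  shows "(LINT x:A|M. k x * (c - g x)) = c * (LINT x:A|M. k x) - (LINT x:A|M. k x * g x)"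
proof -
  have "(LINT x:A|M. k x * (c - g x)) = (LINT x:A|M. c * k x - k x * g x)"
    by (simp add: algebra_simps)
  also have "\<dots> = (LINT x:A|M. c * k x) - (LINT x:A|M. k x * g x)"
    using assms by (intro set_integral_diff(2)) auto
  finally show ?thesis by simp
qed

lemma set_borel_measurable_section:
  fixes f :: "real \<Rightarrow> real \<Rightarrow> real"
  assumes f: "set_borel_measurable borel (A \<times> B) (\<lambda>(x, y). f x y)" and x: "x \<in> A"
  shows "set_borel_measurable lborel B (f x)"
proof -
  have "(\<lambda>y::real. (x, y)) \<in> borel_measurable borel"
    by (intro borel_measurable_continuous_onI continuous_intros)
  from measurable_compose[OF this f[unfolded set_borel_measurable_def]]
  have "(\<lambda>y. indicator (A \<times> B) (x, y) * f x y) \<in> borel_measurable borel" by simp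
  moreover have "indicator (A \<times> B) (x, y) = (indicator B y :: real)" for y
    using x by (simp add: indicator_def)
  ultimately show ?thesis unfolding set_borel_measurable_def by simp
qed

lemma eventually_integral_le_of_limsup:
  fixes f :: "nat \<Rightarrow> 'a \<Rightarrow> real"
  assumes f: "\<And>n. integrable M (f n)" and c: "c \<in> borel_measurable M" and w: "integrable M w"
    and f_le: "\<And>n x. f n x \<le> w x" and c_le: "\<And>x. \<bar>c x\<bar> \<le> w x"
    and limsup: "\<And>x \<delta>. \<delta> > 0 \<Longrightarrow> eventually (\<lambda>n. f n x \<le> c x + \<delta>) sequentially"
    and "\<delta> > 0"
  shows "eventually (\<lambda>n. integral\<^sup>L M (f n) \<le> integral\<^sup>L M c + \<delta>) sequentially"
proof -
  (* Reverse Fatou: the tail suprema G n are dominated by w and decrease to c. *)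
  define G where "G n x = (SUP m\<in>{n..}. max (c x) (f m x))" for n x
  have bdd: "bdd_above ((\<lambda>m. max (c x) (f m x)) ` {n..})" for n x
    using f_le c_le by (intro bdd_aboveI[where M="w x"]) (auto simp: abs_le_iff)
  have G_ge: "max (c x) (f m x) \<le> G n x" if "n \<le> m" for n m x
    unfolding G_def using bdd that by (intro cSUP_upper) auto
  have G_le: "G n x \<le> w x" for n x
    unfolding G_def using f_le c_le by (intro cSUP_least) (auto simp: abs_le_iff)
  have G_measurable: "G n \<in> borel_measurable M" for n
    unfolding G_def using bdd borel_measurable_integrable[OF f] c by (intro borel_measurable_cSUP) auto
  have G_lim: "(\<lambda>n. G n x) \<longlonglongrightarrow> c x" for x
  proof (rule order_tendstoI)
    fix a assume "a < c x"
    then show "\<forall>\<^sub>F n in sequentially. a < G n x"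
      using G_ge[of n n x for n] by (intro always_eventually) (auto intro: less_le_trans)
  next
    fix b assume b: "c x < b"
    then obtain N where N: "\<And>m. N \<le> m \<Longrightarrow> f m x \<le> c x + (b - c x) / 2"
      using limsup[of "(b - c x) / 2" x] by (auto simp: eventually_sequentially)
    have G_N: "G n x \<le> c x + (b - c x) / 2" if "N \<le> n" for n
      unfolding G_def using N that b by (intro cSUP_least) auto
    have "G n x < b" if "N \<le> n" for n using G_N[OF that] b by argo
    then show "\<forall>\<^sub>F n in sequentially. G n x < b"
      unfolding eventually_sequentially by blast
  qed
  have G_bound: "norm (G n x) \<le> w x" for n x
    using G_ge[of n n x] G_le[of n x] c_le[of x] by (auto simp: abs_le_iff)
  note dominated = integrable_dominated_convergence2 integral_dominated_convergence
  have G_integrable: "integrable M (G n)" for n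
    using dominated(1)[OF c G_measurable w AE_I2[OF G_lim] AE_I2[OF G_bound]] .
  have "(\<lambda>n. integral\<^sup>L M (G n)) \<longlonglongrightarrow> integral\<^sup>L M c"
    using dominated(2)[OF c G_measurable w AE_I2[OF G_lim] AE_I2[OF G_bound]] .
  then have "eventually (\<lambda>n. integral\<^sup>L M (G n) < integral\<^sup>L M c + \<delta>) sequentially"
    using \<open>\<delta> > 0\<close> by (intro order_tendstoD) auto
  moreover have "integral\<^sup>L M (f n) \<le> integral\<^sup>L M (G n)" for n
    using G_ge[of n n] by (intro integral_mono f G_integrable) auto
  ultimately show ?thesis by (elim eventually_mono) (meson less_imp_le order_trans)
qed

section \<open>The comparison argument\<close>

lemma bounded_sublevel_of_powr_growth:
  fixes F :: "'a \<Rightarrow> 'b::real_normed_vector \<Rightarrow> real"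
  assumes C1: "0 < C1" and m: "1 \<le> m" and growth: "\<And>x p. C1 * norm p powr m - C2 \<le> F x p"
  shows "\<exists>R. \<forall>x p. F x p \<le> h \<longrightarrow> norm p \<le> R"
proof (intro exI allI impI)
  fix x p assume "F x p \<le> h"
  show "norm p \<le> max 1 ((h + C2) / C1)"
  proof (cases "norm p \<le> 1")
    case False
    then have "norm p powr 1 \<le> norm p powr m" using m by (intro powr_mono) auto
    then have "C1 * norm p \<le> C1 * norm p powr m" using C1 by simp
    then have "C1 * norm p \<le> h + C2" using order_trans[OF growth \<open>F x p \<le> h\<close>] by linarith
    then have "norm p \<le> (h + C2) / C1" using C1 by (simp add: pos_le_divide_eq mult.commute)
    then show ?thesis by (simp add: le_max_iff_disj)
  qed simp
qed

lemma modulus_tendsto_zero: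
  assumes "modulus \<omega>" "d \<longlonglongrightarrow> 0" "\<And>n. 0 \<le> d n"
  shows "(\<lambda>n. \<omega> (d n)) \<longlonglongrightarrow> 0"
proof (rule order_tendstoI)
  fix e :: real assume "e < 0"
  then show "\<forall>\<^sub>F n in sequentially. e < \<omega> (d n)"
    using assms(1,3) by (intro always_eventually) (auto simp: modulus_def intro: less_le_trans)
next
  fix e :: real assume e: "0 < e"
  then have "\<forall>\<^sub>F r in at_right 0. \<omega> r < e"
    using assms(1) unfolding modulus_def by (auto intro: order_tendstoD)
  then obtain b where b: "0 < b" "\<And>r. 0 < r \<Longrightarrow> r < b \<Longrightarrow> \<omega> r < e"
    unfolding eventually_at_right_field by auto
  have "\<forall>\<^sub>F n in sequentially. d n < b" using assms(2) b(1) by (rule order_tendstoD)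
  then show "\<forall>\<^sub>F n in sequentially. \<omega> (d n) < e"
  proof (rule eventually_mono)
    fix n assume "d n < b"
    then show "\<omega> (d n) < e"
      using b(2)[of "d n"] assms(1) assms(3)[of n] e by (cases "d n = 0") (auto simp: modulus_def)
  qed
qed

(* Only what the argument uses: (B1) enters through bounded sublevel sets of H(x,.,xi), (B2) is
   needed for each xi separately, and |I| = 1 is weakened to |I| < infinity. *)
locale nonlocal_comparison =
  fixes I :: "real set" and k :: "real \<Rightarrow> real \<Rightarrow> real"
    and H :: "real ^ 'd \<Rightarrow> real ^ 'd \<Rightarrow> real \<Rightarrow> real"
    and \<alpha> \<kappa> Cu Cv :: real and u v :: "real ^ 'd \<Rightarrow> real \<Rightarrow> real"
  assumes I_sets: "I \<in> sets lborel" and I_finite: "emeasure lborel I < \<infinity>"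
    and k_measurable: "\<And>\<xi>. \<xi> \<in> I \<Longrightarrow> set_borel_measurable lborel I (k \<xi>)"
    and k_nonneg: "\<And>\<xi> \<eta>. \<xi> \<in> I \<Longrightarrow> \<eta> \<in> I \<Longrightarrow> 0 \<le> k \<xi> \<eta>"
    and k_le: "\<And>\<xi> \<eta>. \<xi> \<in> I \<Longrightarrow> \<eta> \<in> I \<Longrightarrow> k \<xi> \<eta> \<le> \<kappa>"
    and H_coercive: "\<And>\<xi> h. \<xi> \<in> I \<Longrightarrow> \<exists>R. \<forall>x p. H x p \<xi> \<le> h \<longrightarrow> norm p \<le> R"
    and H_modulus: "\<And>\<xi> R. \<xi> \<in> I \<Longrightarrow> 0 < R \<Longrightarrow> \<exists>\<omega>. modulus \<omega> \<and>
          (\<forall>x y p. norm p \<le> R \<longrightarrow> \<bar>H x p \<xi> - H y p \<xi>\<bar> \<le> \<omega> (dist x y))"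
    and \<alpha>_pos: "0 < \<alpha>"
    and u_sub: "visc_sub I \<alpha> H k u" and v_super: "visc_super I \<alpha> H k v"
    and u_le: "\<And>x \<eta>. \<eta> \<in> I \<Longrightarrow> u x \<eta> \<le> Cu"
    and v_ge: "\<And>x \<eta>. \<eta> \<in> I \<Longrightarrow> - v x \<eta> \<le> Cv"
begin

definition kernel_mass :: "real \<Rightarrow> real" where
  "kernel_mass \<xi> = (LINT \<eta>:I|lborel. k \<xi> \<eta>)"

definition doubling_max :: "real \<Rightarrow> real \<Rightarrow> real ^ 'd \<Rightarrow> real ^ 'd \<Rightarrow> bool" where
  "doubling_max \<xi> c a b \<longleftrightarrow>
     (\<forall>x y. u x \<xi> - v y \<xi> - c * penalty (x - y) \<le> u a \<xi> - v b \<xi> - c * penalty (a - b))"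

lemma u_Uplus: "Uplus I u"
  using u_sub by (simp add: visc_sub_def)

lemma minus_v_Uplus: "Uplus I (\<lambda>x \<eta>. - v x \<eta>)"
  using v_super by (simp add: visc_super_def Uminus_def)

lemma u_subsolution:
  assumes "C1_torus \<phi> D\<phi>" "\<xi> \<in> I" "loc_max (\<lambda>x. u x \<xi> - \<phi> x) x0"
  shows "\<alpha> * u x0 \<xi> + H x0 (D\<phi> x0) \<xi> + (LINT \<eta>:I|lborel. k \<xi> \<eta> * (u x0 \<xi> - u x0 \<eta>)) \<le> 0"
  using u_sub assms unfolding visc_sub_def by blast

lemma v_supersolution:
  assumes "C1_torus \<phi> D\<phi>" "\<xi> \<in> I" "loc_min (\<lambda>x. v x \<xi> - \<phi> x) x0"
  shows "0 \<le> \<alpha> * v x0 \<xi> + H x0 (D\<phi> x0) \<xi> + (LINT \<eta>:I|lborel. k \<xi> \<eta> * (v x0 \<xi> - v x0 \<eta>))"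
  using v_super assms unfolding visc_super_def by blast

lemma u_integrable: "set_integrable lborel I (u x)"
  using u_Uplus by (simp add: Uplus_def)

lemma v_integrable: "set_integrable lborel I (v x)"
  using minus_v_Uplus set_integrable_mult_right[of "-1" lborel I "\<lambda>\<eta>. - v x \<eta>"]
  by (simp add: Uplus_def)

lemma u_usc: "\<xi> \<in> I \<Longrightarrow> usc (\<lambda>x. u x \<xi>)"
  using u_Uplus by (simp add: Uplus_def)

lemma minus_v_usc: "\<xi> \<in> I \<Longrightarrow> usc (\<lambda>x. - v x \<xi>)"
  using minus_v_Uplus by (simp add: Uplus_def)

lemma u_periodic: "\<xi> \<in> I \<Longrightarrow> periodic_fn (\<lambda>x. u x \<xi>)"
  using u_Uplus by (simp add: Uplus_def)

lemma v_periodic: "\<xi> \<in> I \<Longrightarrow> periodic_fn (\<lambda>x. v x \<xi>)"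
  using minus_v_Uplus by (simp add: Uplus_def periodic_fn_def)

lemma k_abs_le: "\<xi> \<in> I \<Longrightarrow> \<eta> \<in> I \<Longrightarrow> \<bar>k \<xi> \<eta>\<bar> \<le> \<kappa>"
  using k_nonneg k_le by fastforce

lemma k_mult_integrable:
  "\<xi> \<in> I \<Longrightarrow> set_integrable lborel I g \<Longrightarrow> set_integrable lborel I (\<lambda>\<eta>. k \<xi> \<eta> * g \<eta>)"
  using set_integrable_bounded_mult k_measurable k_abs_le by blast

lemma k_integrable: "\<xi> \<in> I \<Longrightarrow> set_integrable lborel I (k \<xi>)"
  using k_mult_integrable[OF _ set_integrable_const[OF I_sets I_finite, of 1]] by simp

lemma kernel_mass_nonneg: "\<xi> \<in> I \<Longrightarrow> 0 \<le> kernel_mass \<xi>"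
  unfolding kernel_mass_def
  using set_integral_ge_const[OF I_sets I_finite k_integrable, of \<xi> 0] k_nonneg by simp

lemma kernel_mass_le: "\<xi> \<in> I \<Longrightarrow> kernel_mass \<xi> \<le> measure lborel I * \<kappa>"
  unfolding kernel_mass_def using set_integral_le_const[OF I_sets I_finite k_integrable] k_le by blast

lemma nonlocal_term_eq:
  assumes "\<xi> \<in> I" "set_integrable lborel I g"
  shows "(LINT \<eta>:I|lborel. k \<xi> \<eta> * (a - g \<eta>)) = a * kernel_mass \<xi> - (LINT \<eta>:I|lborel. k \<xi> \<eta> * g \<eta>)"
  unfolding kernel_mass_def
  using set_integral_mult_const_diff[OF k_integrable k_mult_integrable] assms by blast

lemma doubling_max_exists:
  assumes "\<xi> \<in> I"
  obtains a b where "a \<in> cbox 0 1" "\<And>i. \<bar>(a - b) $ i\<bar> \<le> 1/2" "doubling_max \<xi> c a b"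
proof -
  obtain a b where "a \<in> cbox 0 1" "\<And>i. \<bar>(a - b) $ i\<bar> \<le> 1/2"
    "\<And>x y. u x \<xi> - v y \<xi> - c * penalty (x - y) \<le> u a \<xi> - v b \<xi> - c * penalty (a - b)"
    by (rule penalized_max_exists[OF u_usc[OF assms] u_periodic[OF assms] minus_v_usc[OF assms]
          v_periodic[OF assms], where c=c]) blast
  then show ?thesis using that unfolding doubling_max_def by blast
qed

lemma doubling_max_gap_le:
  assumes "doubling_max \<xi> c a b" "0 \<le> c"
  shows "u z \<xi> - v z \<xi> \<le> u a \<xi> - v b \<xi>"
proof -
  have "u z \<xi> - v z \<xi> \<le> u a \<xi> - v b \<xi> - c * penalty (a - b)"
    using assms(1)[unfolded doubling_max_def, rule_format, of z z] by simp
  moreover have "0 \<le> c * penalty (a - b)" by (rule mult_nonneg_nonneg[OF assms(2) penalty_nonneg])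
  ultimately show ?thesis by linarith
qed

lemma doubling_max_penalty_le:
  assumes "\<xi> \<in> I" "doubling_max \<xi> c a b"
  shows "c * penalty (a - b) \<le> Cu + Cv - (u 0 \<xi> - v 0 \<xi>)"
  using assms(2)[unfolded doubling_max_def, rule_format, of 0 0] u_le[OF assms(1), of a]
    v_ge[OF assms(1), of b]
  by simp

lemma doubling_max_dist_le:
  assumes "\<xi> \<in> I" "doubling_max \<xi> c a b" "0 < c" "\<And>i. \<bar>(a - b) $ i\<bar> \<le> 1/2"
  shows "dist a b \<le> sqrt ((Cu + Cv - (u 0 \<xi> - v 0 \<xi>)) / c)"
proof -
  have "dist a b \<le> sqrt (penalty (a - b))"
    unfolding dist_norm by (rule norm_le_sqrt_penalty[OF assms(4)])
  also have "penalty (a - b) \<le> (Cu + Cv - (u 0 \<xi> - v 0 \<xi>)) / c"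
    using doubling_max_penalty_le[OF assms(1,2)] assms(3) by (simp add: pos_le_divide_eq mult.commute)
  then have "sqrt (penalty (a - b)) \<le> sqrt ((Cu + Cv - (u 0 \<xi> - v 0 \<xi>)) / c)" by simp
  finally show ?thesis .
qed

lemma viscosity_inequalities_at_doubling_max:
  assumes \<xi>: "\<xi> \<in> I" and max: "doubling_max \<xi> c a b"
  defines "p \<equiv> c *\<^sub>R penalty_grad (a - b)"
  shows "\<alpha> * u a \<xi> + H a p \<xi> + (LINT \<eta>:I|lborel. k \<xi> \<eta> * (u a \<xi> - u a \<eta>)) \<le> 0"
    and "0 \<le> \<alpha> * v b \<xi> + H b p \<xi> + (LINT \<eta>:I|lborel. k \<xi> \<eta> * (v b \<xi> - v b \<eta>))"
proof -
  have "loc_max (\<lambda>x. u x \<xi> - (c * penalty (x - b) + v b \<xi>)) a"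
    unfolding loc_max_def
  proof (intro exI[of _ 1] conjI allI impI)
    fix y
    show "u y \<xi> - (c * penalty (y - b) + v b \<xi>) \<le> u a \<xi> - (c * penalty (a - b) + v b \<xi>)"
      using max[unfolded doubling_max_def, rule_format, of y b] by simp
  qed simp
  from u_subsolution[OF C1_torus_penalty \<xi> this]
  show "\<alpha> * u a \<xi> + H a p \<xi> + (LINT \<eta>:I|lborel. k \<xi> \<eta> * (u a \<xi> - u a \<eta>)) \<le> 0"
    by (simp add: p_def)
next
  have penalty_swap: "penalty (x - y) = penalty (y - x)" for x y :: "real ^ 'd"
    using penalty_minus[of "y - x"] by simp
  have "loc_min (\<lambda>y. v y \<xi> - ((- c) * penalty (y - a) + u a \<xi>)) b"
    unfolding loc_min_def
  proof (intro exI[of _ 1] conjI allI impI)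
    fix y
    show "v b \<xi> - ((- c) * penalty (b - a) + u a \<xi>) \<le> v y \<xi> - ((- c) * penalty (y - a) + u a \<xi>)"
      using max[unfolded doubling_max_def, rule_format, of a y] penalty_swap[of a y] penalty_swap[of a b]
      by simp
  qed simp
  note super = v_supersolution[OF C1_torus_penalty \<xi> this]
  have "penalty_grad (b - a) = - penalty_grad (a - b)"
    using penalty_grad_minus[of "a - b"] by (simp only: minus_diff_eq)
  then have "(- c) *\<^sub>R penalty_grad (b - a) = p" by (simp add: p_def)
  with super show "0 \<le> \<alpha> * v b \<xi> + H b p \<xi> + (LINT \<eta>:I|lborel. k \<xi> \<eta> * (v b \<xi> - v b \<eta>))"
    by simp
qed

lemma doubling_max_grad_bounded:
  assumes \<xi>: "\<xi> \<in> I"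
  obtains R where "0 < R"
    "\<And>c a b. 0 \<le> c \<Longrightarrow> doubling_max \<xi> c a b \<Longrightarrow> norm (c *\<^sub>R penalty_grad (a - b)) \<le> R"
proof -
  (* Comparing with the value at (0, 0) bounds u(a,xi) from below uniformly in c; the
     subsolution inequality then bounds H(a,p,xi) from above. *)
  define L where "L = u 0 \<xi> - v 0 \<xi> - Cv"
  define h where "h = measure lborel I * (\<kappa> * \<bar>L - Cu\<bar>) - \<alpha> * L"
  obtain R where R: "\<And>x p. H x p \<xi> \<le> h \<Longrightarrow> norm p \<le> R" using H_coercive[OF \<xi>] by blast
  have "norm (c *\<^sub>R penalty_grad (a - b)) \<le> R" if c: "0 \<le> c" and max: "doubling_max \<xi> c a b" for c a b
  proof (rule R)
    have uL: "L \<le> u a \<xi>"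
      using doubling_max_gap_le[OF max c, of 0] v_ge[OF \<xi>, of b] by (simp add: L_def)
    have "measure lborel I * (- (\<kappa> * \<bar>L - Cu\<bar>)) \<le> (LINT \<eta>:I|lborel. k \<xi> \<eta> * (u a \<xi> - u a \<eta>))"
    proof (rule set_integral_ge_const[OF I_sets I_finite])
      show "set_integrable lborel I (\<lambda>\<eta>. k \<xi> \<eta> * (u a \<xi> - u a \<eta>))"
        using k_mult_integrable[OF \<xi> set_integral_diff(1)[OF set_integrable_const[OF I_sets I_finite]
              u_integrable]] .
      fix \<eta> assume \<eta>: "\<eta> \<in> I"
      have "k \<xi> \<eta> * (L - Cu) \<le> k \<xi> \<eta> * (u a \<xi> - u a \<eta>)"
        using uL u_le[OF \<eta>, of a] k_nonneg[OF \<xi> \<eta>] by (intro mult_left_mono) auto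
      moreover have "\<bar>k \<xi> \<eta> * (L - Cu)\<bar> \<le> \<kappa> * \<bar>L - Cu\<bar>"
        unfolding abs_mult using k_abs_le[OF \<xi> \<eta>] by (intro mult_right_mono) auto
      ultimately show "- (\<kappa> * \<bar>L - Cu\<bar>) \<le> k \<xi> \<eta> * (u a \<xi> - u a \<eta>)" by linarith
    qed
    moreover have "\<alpha> * L \<le> \<alpha> * u a \<xi>" using uL \<alpha>_pos by simp
    ultimately show "H a (c *\<^sub>R penalty_grad (a - b)) \<xi> \<le> h"
      using viscosity_inequalities_at_doubling_max(1)[OF \<xi> max] unfolding h_def by linarith
  qed
  then show ?thesis using that[of "max 1 R"] by fastforce
qed

lemma doubling_estimate:
  assumes \<xi>: "\<xi> \<in> I" and c: "0 \<le> c" and max: "doubling_max \<xi> c a b"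
  defines "p \<equiv> c *\<^sub>R penalty_grad (a - b)"
  shows "(\<alpha> + kernel_mass \<xi>) * (u z \<xi> - v z \<xi>)
    \<le> H b p \<xi> - H a p \<xi> + (LINT \<eta>:I|lborel. k \<xi> \<eta> * (u a \<eta> - v b \<eta>))"
proof -
  define Ju Jv where "Ju = (LINT \<eta>:I|lborel. k \<xi> \<eta> * u a \<eta>)" and "Jv = (LINT \<eta>:I|lborel. k \<xi> \<eta> * v b \<eta>)"
  have sub: "\<alpha> * u a \<xi> + H a p \<xi> + (u a \<xi> * kernel_mass \<xi> - Ju) \<le> 0"
    using viscosity_inequalities_at_doubling_max(1)[OF \<xi> max]
    unfolding nonlocal_term_eq[OF \<xi> u_integrable] Ju_def p_def .
  have super: "0 \<le> \<alpha> * v b \<xi> + H b p \<xi> + (v b \<xi> * kernel_mass \<xi> - Jv)"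
    using viscosity_inequalities_at_doubling_max(2)[OF \<xi> max]
    unfolding nonlocal_term_eq[OF \<xi> v_integrable] Jv_def p_def .
  have J: "(LINT \<eta>:I|lborel. k \<xi> \<eta> * (u a \<eta> - v b \<eta>)) = Ju - Jv"
    unfolding Ju_def Jv_def right_diff_distrib
    by (intro set_integral_diff(2) k_mult_integrable \<xi> u_integrable v_integrable)
  have "(\<alpha> + kernel_mass \<xi>) * (u z \<xi> - v z \<xi>) \<le> (\<alpha> + kernel_mass \<xi>) * (u a \<xi> - v b \<xi>)"
    using doubling_max_gap_le[OF max c] \<alpha>_pos kernel_mass_nonneg[OF \<xi>] by (intro mult_left_mono) auto
  also have "\<dots> = \<alpha> * u a \<xi> + u a \<xi> * kernel_mass \<xi> - (\<alpha> * v b \<xi> + v b \<xi> * kernel_mass \<xi>)"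
    by (simp add: algebra_simps)
  finally show ?thesis using sub super J by linarith
qed

lemma doubling_max_sequence:
  assumes \<xi>: "\<xi> \<in> I"
  obtains c A B x0 where "\<And>n. 0 \<le> c n" "\<And>n. doubling_max \<xi> (c n) (A n) (B n)"
    "A \<longlonglongrightarrow> x0" "B \<longlonglongrightarrow> x0"
proof -
  have "\<exists>a b. a \<in> cbox 0 1 \<and> (\<forall>i. \<bar>(a - b) $ i\<bar> \<le> 1/2) \<and> doubling_max \<xi> (real n + 1) a b" for n
    using doubling_max_exists[OF \<xi>] by metis
  then obtain A B where A: "\<And>n. A n \<in> cbox 0 1" and AB: "\<And>n i. \<bar>(A n - B n) $ i\<bar> \<le> 1/2"
    and max: "\<And>n. doubling_max \<xi> (real n + 1) (A n) (B n)"
    by metis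
  define M where "M = Cu + Cv - (u 0 \<xi> - v 0 \<xi>)"
  have dist_le: "dist (A n) (B n) \<le> sqrt (M * (1 / (real n + 1)))" for n
    using doubling_max_dist_le[OF \<xi> max _ AB, of n] by (simp add: M_def)
  have "(\<lambda>n. 1 / (real n + 1)) \<longlonglongrightarrow> 0"
    using LIMSEQ_inverse_real_of_nat by (simp add: inverse_eq_divide add.commute)
  then have "(\<lambda>n. sqrt (M * (1 / (real n + 1)))) \<longlonglongrightarrow> sqrt (M * 0)"
    by (intro tendsto_real_sqrt tendsto_mult tendsto_const)
  then have sqrt_lim: "(\<lambda>n. sqrt (M * (1 / (real n + 1)))) \<longlonglongrightarrow> 0"
    by (simp only: mult_zero_right real_sqrt_zero)
  have dist_AB: "(\<lambda>n. dist (A n) (B n)) \<longlonglongrightarrow> 0"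
  proof (rule tendsto_sandwich[of "\<lambda>_. 0" _ _ "\<lambda>n. sqrt (M * (1 / (real n + 1)))"])
    show "\<forall>\<^sub>F n in sequentially. dist (A n) (B n) \<le> sqrt (M * (1 / (real n + 1)))"
      by (intro always_eventually allI dist_le)
  qed (simp_all only: zero_le_dist eventually_True tendsto_const sqrt_lim)
  obtain x0 r where r: "strict_mono r" and Ar: "(A \<circ> r) \<longlonglongrightarrow> x0"
    using seq_compactE[OF compact_imp_seq_compact[OF compact_cbox], of A] A by blast
  have "(\<lambda>n. dist (A (r n)) (B (r n))) \<longlonglongrightarrow> 0"
    using LIMSEQ_subseq_LIMSEQ[OF dist_AB r] by (simp add: o_def)
  then have "(\<lambda>n. A (r n) - B (r n)) \<longlonglongrightarrow> 0"
    by (simp add: tendsto_dist_iff[of "\<lambda>n. A (r n) - B (r n)"] dist_norm)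
  from tendsto_diff[OF Ar[unfolded o_def] this] have Br: "(B \<circ> r) \<longlonglongrightarrow> x0"
    by (simp add: o_def)
  show ?thesis
  proof (rule that[of "\<lambda>n. real (r n) + 1" "A \<circ> r" "B \<circ> r" x0])
    show "doubling_max \<xi> (real (r n) + 1) ((A \<circ> r) n) ((B \<circ> r) n)" for n
      using max by simp
  qed (simp_all add: Ar Br)
qed

lemma nonlocal_integrand_limsup_le:
  assumes \<xi>: "\<xi> \<in> I" and \<eta>: "\<eta> \<in> I" and \<theta>: "\<And>x \<eta>. \<eta> \<in> I \<Longrightarrow> u x \<eta> - v x \<eta> \<le> \<theta>"
    and A: "A \<longlonglongrightarrow> x0" and B: "B \<longlonglongrightarrow> x0" and e: "0 < e"
  shows "\<forall>\<^sub>F n in sequentially. k \<xi> \<eta> * (u (A n) \<eta> - v (B n) \<eta>) \<le> k \<xi> \<eta> * \<theta> + e"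
proof -
  have \<kappa>: "0 \<le> \<kappa>" using k_nonneg[OF \<xi> \<xi>] k_le[OF \<xi> \<xi>] by linarith
  define \<epsilon> where "\<epsilon> = e / (2 * (\<kappa> + 1))"
  have \<epsilon>: "0 < \<epsilon>" using e \<kappa> by (simp add: \<epsilon>_def)
  have "\<forall>\<^sub>F n in sequentially. u (A n) \<eta> < u x0 \<eta> + \<epsilon>"
    using usc_tendsto_lt[OF u_usc[OF \<eta>] A] \<epsilon> by simp
  moreover have "\<forall>\<^sub>F n in sequentially. - v (B n) \<eta> < - v x0 \<eta> + \<epsilon>"
    using usc_tendsto_lt[OF minus_v_usc[OF \<eta>] B] \<epsilon> by simp
  ultimately show ?thesis
  proof eventually_elim
    case (elim n)
    then have "u (A n) \<eta> - v (B n) \<eta> \<le> \<theta> + 2 * \<epsilon>" using \<theta>[OF \<eta>, of x0] by linarith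
    then have "k \<xi> \<eta> * (u (A n) \<eta> - v (B n) \<eta>) \<le> k \<xi> \<eta> * \<theta> + k \<xi> \<eta> * (2 * \<epsilon>)"
      using k_nonneg[OF \<xi> \<eta>] mult_left_mono by (fastforce simp: distrib_left)
    also have "k \<xi> \<eta> * (2 * \<epsilon>) \<le> (\<kappa> + 1) * (2 * \<epsilon>)"
      using k_le[OF \<xi> \<eta>] \<epsilon> by (intro mult_right_mono) auto
    also have "(\<kappa> + 1) * (2 * \<epsilon>) = e" using \<kappa> by (simp add: \<epsilon>_def field_simps)
    finally show ?case by simp
  qed
qed

lemma nonlocal_limsup_le:
  assumes \<xi>: "\<xi> \<in> I" and \<theta>: "\<And>x \<eta>. \<eta> \<in> I \<Longrightarrow> u x \<eta> - v x \<eta> \<le> \<theta>"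
    and A: "A \<longlonglongrightarrow> x0" and B: "B \<longlonglongrightarrow> x0" and \<delta>: "0 < \<delta>"
  shows "\<forall>\<^sub>F n in sequentially.
    (LINT \<eta>:I|lborel. k \<xi> \<eta> * (u (A n) \<eta> - v (B n) \<eta>)) \<le> kernel_mass \<xi> * \<theta> + \<delta>"
proof -
  define f where "f n \<eta> = indicator I \<eta> * (k \<xi> \<eta> * (u (A n) \<eta> - v (B n) \<eta>))" for n \<eta>
  define g where "g \<eta> = indicator I \<eta> * (k \<xi> \<eta> * \<theta>)" for \<eta>
  define w where "w \<eta> = indicator I \<eta> * (\<kappa> * (\<bar>Cu + Cv\<bar> + \<bar>\<theta>\<bar>))" for \<eta>
  have \<kappa>: "0 \<le> \<kappa>" using k_nonneg[OF \<xi> \<xi>] k_le[OF \<xi> \<xi>] by linarith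
  have f_integrable: "integrable lborel (f n)" for n
    using k_mult_integrable[OF \<xi> set_integral_diff(1)[OF u_integrable v_integrable]]
    unfolding f_def set_integrable_def by simp
  have g_measurable: "g \<in> borel_measurable lborel"
    using set_borel_measurable_mult[OF k_measurable[OF \<xi>] set_borel_measurable_const[OF I_sets]]
    unfolding g_def set_borel_measurable_def by simp
  have w_integrable: "integrable lborel w"
    using set_integrable_const[OF I_sets I_finite] unfolding w_def set_integrable_def by simp
  have f_le: "f n \<eta> \<le> w \<eta>" for n \<eta>
  proof (cases "\<eta> \<in> I")
    case True
    have "u (A n) \<eta> - v (B n) \<eta> \<le> \<bar>Cu + Cv\<bar>"
      using u_le[OF True, of "A n"] v_ge[OF True, of "B n"] by linarith
    then have "k \<xi> \<eta> * (u (A n) \<eta> - v (B n) \<eta>) \<le> k \<xi> \<eta> * \<bar>Cu + Cv\<bar>"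
      using k_nonneg[OF \<xi> True] by (rule mult_left_mono)
    also have "\<dots> \<le> \<kappa> * (\<bar>Cu + Cv\<bar> + \<bar>\<theta>\<bar>)"
      using k_nonneg[OF \<xi> True] k_le[OF \<xi> True] by (intro mult_mono) auto
    finally show ?thesis using True by (simp add: f_def w_def)
  qed (use \<kappa> in \<open>simp add: f_def w_def\<close>)
  have g_le: "\<bar>g \<eta>\<bar> \<le> w \<eta>" for \<eta>
  proof (cases "\<eta> \<in> I")
    case True
    then have "\<bar>k \<xi> \<eta>\<bar> * \<bar>\<theta>\<bar> \<le> \<kappa> * (\<bar>Cu + Cv\<bar> + \<bar>\<theta>\<bar>)"
      using k_abs_le[OF \<xi> True] \<kappa> by (intro mult_mono) auto
    then show ?thesis using True by (simp add: g_def w_def abs_mult)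
  qed (use \<kappa> in \<open>simp add: g_def w_def\<close>)
  have f_limsup: "\<forall>\<^sub>F n in sequentially. f n \<eta> \<le> g \<eta> + e" if "0 < e" for \<eta> e
    using nonlocal_integrand_limsup_le[OF \<xi> _ \<theta> A B that, of \<eta>] that
    by (cases "\<eta> \<in> I") (simp_all add: f_def g_def)
  have "\<forall>\<^sub>F n in sequentially. integral\<^sup>L lborel (f n) \<le> integral\<^sup>L lborel g + \<delta>"
    by (rule eventually_integral_le_of_limsup[OF f_integrable g_measurable w_integrable f_le g_le
          f_limsup \<delta>])
  moreover have "integral\<^sup>L lborel (f n) = (LINT \<eta>:I|lborel. k \<xi> \<eta> * (u (A n) \<eta> - v (B n) \<eta>))" for n
    unfolding set_lebesgue_integral_def by (rule arg_cong[where f="integral\<^sup>L lborel"]) (simp add: fun_eq_iff f_def)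
  moreover have "integral\<^sup>L lborel g = kernel_mass \<xi> * \<theta>"
  proof -
    have "g = (\<lambda>\<eta>. indicator I \<eta> *\<^sub>R k \<xi> \<eta> * \<theta>)" by (simp add: fun_eq_iff g_def)
    then show ?thesis by (simp add: kernel_mass_def set_lebesgue_integral_def)
  qed
  ultimately show ?thesis by simp
qed

lemma comparison_at:
  assumes \<xi>: "\<xi> \<in> I" and \<theta>: "\<And>x \<eta>. \<eta> \<in> I \<Longrightarrow> u x \<eta> - v x \<eta> \<le> \<theta>"
  shows "(\<alpha> + kernel_mass \<xi>) * (u z \<xi> - v z \<xi>) \<le> kernel_mass \<xi> * \<theta>"
proof -
  obtain c A B x0 where c: "\<And>n. 0 \<le> c n" and max: "\<And>n. doubling_max \<xi> (c n) (A n) (B n)"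
    and A: "A \<longlonglongrightarrow> x0" and B: "B \<longlonglongrightarrow> x0"
    by (rule doubling_max_sequence[OF \<xi>]) blast
  obtain R where R: "0 < R"
    "\<And>c a b. 0 \<le> c \<Longrightarrow> doubling_max \<xi> c a b \<Longrightarrow> norm (c *\<^sub>R penalty_grad (a - b)) \<le> R"
    by (rule doubling_max_grad_bounded[OF \<xi>]) blast
  obtain \<omega> where \<omega>: "modulus \<omega>" "\<And>x y p. norm p \<le> R \<Longrightarrow> \<bar>H x p \<xi> - H y p \<xi>\<bar> \<le> \<omega> (dist x y)"
    using H_modulus[OF \<xi> R(1)] by blast
  define J where "J n = (LINT \<eta>:I|lborel. k \<xi> \<eta> * (u (A n) \<eta> - v (B n) \<eta>))" for n
  have estimate: "(\<alpha> + kernel_mass \<xi>) * (u z \<xi> - v z \<xi>) \<le> \<omega> (dist (A n) (B n)) + J n" for n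
  proof -
    let ?p = "c n *\<^sub>R penalty_grad (A n - B n)"
    have "H (B n) ?p \<xi> - H (A n) ?p \<xi> \<le> \<omega> (dist (A n) (B n))"
      using \<omega>(2)[OF R(2)[OF c[of n] max[of n]], of "B n" "A n"] by (simp add: dist_commute)
    then show ?thesis using doubling_estimate[OF \<xi> c[of n] max[of n], of z] unfolding J_def by linarith
  qed
  have "(\<lambda>n. \<omega> (dist (A n) (B n))) \<longlonglongrightarrow> 0"
    using tendsto_dist[OF A B] by (intro modulus_tendsto_zero[OF \<omega>(1)]) auto
  show ?thesis
  proof (rule field_le_epsilon)
    fix e :: real assume e: "0 < e"
    have "\<forall>\<^sub>F n in sequentially. \<omega> (dist (A n) (B n)) < e / 2"
      using \<open>(\<lambda>n. \<omega> (dist (A n) (B n))) \<longlonglongrightarrow> 0\<close> e by (intro order_tendstoD) auto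
    moreover have "\<forall>\<^sub>F n in sequentially. J n \<le> kernel_mass \<xi> * \<theta> + e / 2"
      unfolding J_def using e by (intro nonlocal_limsup_le[OF \<xi> \<theta> A B]) auto
    ultimately obtain n where "\<omega> (dist (A n) (B n)) < e / 2" "J n \<le> kernel_mass \<xi> * \<theta> + e / 2"
      using eventually_happens'[OF sequentially_bot eventually_conj] by blast
    then show "(\<alpha> + kernel_mass \<xi>) * (u z \<xi> - v z \<xi>) \<le> kernel_mass \<xi> * \<theta> + e"
      using estimate[of n] by argo
  qed
qed

theorem comparison:
  assumes "\<xi> \<in> I"
  shows "u x \<xi> \<le> v x \<xi>"
proof -
  define T where "T = {u y \<eta> - v y \<eta> | y \<eta>. \<eta> \<in> I}"
  have T_bdd: "bdd_above T"
  proof (rule bdd_aboveI)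
    fix t assume "t \<in> T"
    then obtain y \<eta> where "t = u y \<eta> - v y \<eta>" "\<eta> \<in> I" unfolding T_def by blast
    then show "t \<le> Cu + Cv" using u_le[of \<eta> y] v_ge[of \<eta> y] by linarith
  qed
  have T_ne: "T \<noteq> {}" using assms unfolding T_def by blast
  define \<theta> where "\<theta> = Sup T"
  have \<theta>: "u y \<eta> - v y \<eta> \<le> \<theta>" if "\<eta> \<in> I" for y \<eta>
    unfolding \<theta>_def using that T_bdd by (intro cSup_upper) (auto simp: T_def)
  define \<kappa>' where "\<kappa>' = measure lborel I * \<kappa>"
  have \<kappa>': "0 \<le> \<kappa>'"
    using k_nonneg[OF assms assms] k_le[OF assms assms] unfolding \<kappa>'_def by simp
  (* With K = kernel_mass eta: alpha t <= K (theta - t) <= kappa' (theta - t), as t <= theta. *)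
  have "t \<le> \<kappa>' * \<theta> / (\<alpha> + \<kappa>')" if "t \<in> T" for t
  proof -
    obtain y \<eta> where t: "t = u y \<eta> - v y \<eta>" and \<eta>: "\<eta> \<in> I" using \<open>t \<in> T\<close> unfolding T_def by blast
    have "(\<alpha> + kernel_mass \<eta>) * t \<le> kernel_mass \<eta> * \<theta>" unfolding t by (rule comparison_at[OF \<eta> \<theta>])
    moreover have "kernel_mass \<eta> * (\<theta> - t) \<le> \<kappa>' * (\<theta> - t)"
      using kernel_mass_le[OF \<eta>] \<theta>[OF \<eta>] unfolding t \<kappa>'_def by (intro mult_right_mono) auto
    ultimately have "(\<alpha> + \<kappa>') * t \<le> \<kappa>' * \<theta>" by (simp add: algebra_simps)
    then show ?thesis using \<alpha>_pos \<kappa>' by (simp add: pos_le_divide_eq mult.commute)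
  qed
  then have "\<theta> \<le> \<kappa>' * \<theta> / (\<alpha> + \<kappa>')" unfolding \<theta>_def by (intro cSup_least T_ne)
  then have "\<alpha> * \<theta> \<le> 0" using \<alpha>_pos \<kappa>' by (simp add: pos_le_divide_eq algebra_simps)
  then have "\<theta> \<le> 0" using \<alpha>_pos by (simp add: mult_le_0_iff)
  then show ?thesis using \<theta>[OF assms, of x] by simp
qed

end

theorem mainTheorem4:
  fixes I :: "real set" and k :: "real \<Rightarrow> real \<Rightarrow> real"
    and H :: "real ^ 'd \<Rightarrow> real ^ 'd \<Rightarrow> real \<Rightarrow> real"
    and u v :: "real ^ 'd \<Rightarrow> real \<Rightarrow> real"
    and \<alpha> k0 k1 :: real
  assumes I_interval: "is_interval I" and I_bounded: "bounded I" and I_length: "measure lborel I = 1"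
    and k_meas: "set_borel_measurable borel (I \<times> I) (\<lambda>(\<xi>, \<eta>). k \<xi> \<eta>)"
    and k0_pos: "0 < k0" and k_bounds: "\<And>\<xi> \<eta>. \<xi> \<in> I \<Longrightarrow> \<eta> \<in> I \<Longrightarrow> k0 \<le> k \<xi> \<eta> \<and> k \<xi> \<eta> \<le> k1"
    and H_cont: "\<And>\<xi>. \<xi> \<in> I \<Longrightarrow> continuous_on UNIV (\<lambda>(x, p). H x p \<xi>)"
    and H_periodic: "\<And>p \<xi>. \<xi> \<in> I \<Longrightarrow> periodic_fn (\<lambda>x. H x p \<xi>)"
    and H_meas: "\<And>x p. set_borel_measurable lborel I (H x p)"
    and H_bdd: "\<And>p. \<exists>C. \<forall>x. \<forall>\<xi>\<in>I. \<bar>H x p \<xi>\<bar> \<le> C"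
    and B1: "\<exists>C1 C2 m. C1 > 0 \<and> C2 > 0 \<and> m > 1 \<and>
               (\<forall>x p. \<forall>\<xi>\<in>I. C1 * norm p powr m - C2 \<le> H x p \<xi>)"
    and B2: "\<forall>R>0. \<exists>\<omega>. modulus \<omega> \<and>
               (\<forall>x y p. \<forall>\<xi>\<in>I. norm p \<le> R \<longrightarrow> \<bar>H x p \<xi> - H y p \<xi>\<bar> \<le> \<omega> (dist x y))"
    and alpha_pos: "\<alpha> > 0"
    and u_sub: "visc_sub I \<alpha> H k u"
    and v_super: "visc_super I \<alpha> H k v"
    and u_bdd: "\<exists>C. \<forall>x. \<forall>\<xi>\<in>I. u x \<xi> \<le> C"
    and v_bdd: "\<exists>C. \<forall>x. \<forall>\<xi>\<in>I. - v x \<xi> \<le> C"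
  shows "\<forall>x. \<forall>\<xi>\<in>I. u x \<xi> \<le> v x \<xi>"
proof -
  obtain C1 C2 m where C1: "0 < C1" and m: "1 < m"
    and growth: "\<And>x p \<xi>. \<xi> \<in> I \<Longrightarrow> C1 * norm p powr m - C2 \<le> H x p \<xi>"
    using B1 by blast
  obtain Cu where Cu: "\<And>x \<xi>. \<xi> \<in> I \<Longrightarrow> u x \<xi> \<le> Cu" using u_bdd by blast
  obtain Cv where Cv: "\<And>x \<xi>. \<xi> \<in> I \<Longrightarrow> - v x \<xi> \<le> Cv" using v_bdd by blast
  interpret nonlocal_comparison I k H \<alpha> k1 Cu Cv u v
  proof
    show "I \<in> sets lborel" using real_interval_borel_measurable[OF I_interval] by simp
    show "emeasure lborel I < \<infinity>" by (rule emeasure_bounded_finite[OF I_bounded])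
    show "set_borel_measurable lborel I (k \<xi>)" if "\<xi> \<in> I" for \<xi>
      by (rule set_borel_measurable_section[OF k_meas that])
    show "0 \<le> k \<xi> \<eta>" "k \<xi> \<eta> \<le> k1" if "\<xi> \<in> I" "\<eta> \<in> I" for \<xi> \<eta>
      using k_bounds[OF that] k0_pos by auto
    show "\<exists>R. \<forall>x p. H x p \<xi> \<le> h \<longrightarrow> norm p \<le> R" if "\<xi> \<in> I" for \<xi> h
      using bounded_sublevel_of_powr_growth[OF C1 less_imp_le[OF m] growth[OF that]] .
    show "\<exists>\<omega>. modulus \<omega> \<and> (\<forall>x y p. norm p \<le> R \<longrightarrow> \<bar>H x p \<xi> - H y p \<xi>\<bar> \<le> \<omega> (dist x y))"
      if "\<xi> \<in> I" "0 < R" for \<xi> R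
      using B2 that by blast
  qed (use alpha_pos u_sub v_super Cu Cv in auto)
  show ?thesis using comparison by auto
qed

end
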